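(* Let $E$ be a congruence on $\overline{\boldsymbol{T}(X_1,\ldots,X_n)}$ and $F$ a congruence on $\overline{\boldsymbol{T}(Y_1,\ldots,Y_m)}$. Put $V:=\boldsymbol{V}(E)\subset\mathbb{R}^n$ and $W:=\boldsymbol{V}(F)\subset\mathbb{R}^m$. Let $\pi_E:\overline{\boldsymbol{T}(X_1,\ldots,X_n)}\twoheadrightarrow\overline{\boldsymbol{T}(X_1,\ldots,X_n)}/E$ be the natural surjective $\boldsymbol{T}$-algebra homomorphism. Let $\psi:\overline{\boldsymbol{T}(X_1,\ldots,X_n)}/E\to\overline{\boldsymbol{T}(Y_1,\ldots,Y_m)}/F$ be a $\boldsymbol{T}$-algebra homomorphism, and define $$\theta:W\to\boldsymbol{T}^n,\quad y\mapsto\big(\psi(\pi_E(X_1))(y),\ldots,\psi(\pi_E(X_n))(y)\big).$$ Then: (1) for every $f\in\overline{\boldsymbol{T}(X_1,\ldots,X_n)}$ and every $y\in W$, $\psi(\pi_E(f))(y)=\pi_E(f)(\theta(y))=f(\theta(y))$; (2) $\operatorname{Im}(\theta)\subset V$; (3) $\theta$ is continuous; (4) if $\psi$ is surjective, then $\theta$ is a closed embedding; (5) if $\psi$ is injective, $F=\boldsymbol{E}(W)$ and $\operatorname{Im}(\theta)$ is closed, then $\operatorname{Im}(\theta)\supset V$; (6) if $\psi$ is an isomorphism and $F=\boldsymbol{E}(W)$, then $V$ and $W$ are homeomorphic via $\theta$.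
   Context: $\boldsymbol{T}=\mathbb{R}\cup\{-\infty\}$ is the tropical semifield with $a\oplus b=\max\{a,b\}$ and $a\odot b=a+b$. Semirings are commutative with additive neutral element $0$ (absorbing) and multiplicative identity $1$; a semifield is a semiring with $0\neq1$ in which every nonzero element is multiplicatively invertible. A $\boldsymbol{T}$-algebra is a semiring $S$ together with a semiring homomorphism $\boldsymbol{T}\to S$; a $\boldsymbol{T}$-algebra homomorphism is a semiring homomorphism compatible with these structure maps. $\boldsymbol{T}[X_1,\ldots,X_n]$ is the tropical polynomial semiring; $\overline{\boldsymbol{T}[X_1,\ldots,X_n]}$ is its quotient by the congruence identifying two tropical polynomials that define the same function $\boldsymbol{T}^n\to\boldsymbol{T}$ (the tropical polynomial function semiring). This quotient is cancellative, and $\overline{\boldsymbol{T}(X_1,\ldots,X_n)}$ denotes its semifield of fractions (the tropical rational function semifield); $X_i$ also denotes the image of the variable $X_i$ there. Every element $f=g/h$ ($h\neq-\infty$) defines a function $\mathbb{R}^n\to\boldsymbol{T}$, $x\mapsto g(x)-h(x)$; the element $-\infty$ is the constant function $-\infty$ and all other elements are real-valued on $\mathbb{R}^n$. A congruence on a semiring $S$ is an equivalence relation $E\subset S\times S$ such that $(x,y),(z,w)\in E$ imply $(x+z,y+w)\in E$ and $(xz,yw)\in E$; $S/E$ is the quotient semiring. For a congruence $E$ on $\overline{\boldsymbol{T}(X_1,\ldots,X_n)}$, the congruence variety is $\boldsymbol{V}(E)=\{x\in\mathbb{R}^n\mid f(x)=g(x)\ \forall (f,g)\in E\}$. For $V\subset\mathbb{R}^n$,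 $\boldsymbol{E}(V)=\{(f,g)\mid f(x)=g(x)\ \forall x\in V\}$, a congruence on $\overline{\boldsymbol{T}(X_1,\ldots,X_n)}$. For $x\in\boldsymbol{V}(E)$ an element $\pi_E(f)$ of the quotient is evaluated by $\pi_E(f)(x):=f(x)$ (well defined). $\mathbb{R}^n$, $\boldsymbol{T}^n$ carry the Euclidean topology. *)

theory Defs
  imports "HOL-Analysis.Analysis" "HOL-Library.Extended_Real"
begin

definition TT :: "ereal set" where
  "TT = {c. c \<noteq> \<infinity>}"

text \<open>Tropical polynomial (finite set of terms (exponent vector, real coefficient)),
  evaluated as a function on R^n; only nonempty term sets are used.\<close>
definition tpoly :: "(('n::finite \<Rightarrow> nat) \<times> real) set \<Rightarrow> real^'n \<Rightarrow> real" where
  "tpoly P x = Max ((\<lambda>(a, c). c + (\<Sum>i\<in>UNIV. real (a i) * x $ i)) ` P)"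

text \<open>The tropical rational function semifield, each element identified with the
  function it defines on R^n (the constant -\<infinity> or a difference of two tropical
  polynomial functions).\<close>
definition trop_rat :: "(real^'n::finite \<Rightarrow> ereal) set" where
  "trop_rat = {\<lambda>x. -\<infinity>} \<union>
     {\<lambda>x. ereal (tpoly P x - tpoly Q x) | P Q. finite P \<and> P \<noteq> {} \<and> finite Q \<and> Q \<noteq> {}}"

definition tplus :: "('a \<Rightarrow> ereal) \<Rightarrow> ('a \<Rightarrow> ereal) \<Rightarrow> 'a \<Rightarrow> ereal" where
  "tplus f g = (\<lambda>x. max (f x) (g x))"

definition ttimes :: "('a \<Rightarrow> ereal) \<Rightarrow> ('a \<Rightarrow> ereal) \<Rightarrow> 'a \<Rightarrow> ereal" where
  "ttimes f g = (\<lambda>x. f x + g x)"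

definition tconst :: "ereal \<Rightarrow> 'a \<Rightarrow> ereal" where
  "tconst c = (\<lambda>x. c)"

definition Xvar :: "'n::finite \<Rightarrow> real^'n \<Rightarrow> ereal" where
  "Xvar i = (\<lambda>x. ereal (x $ i))"

definition trop_congruence :: "(real^'n::finite \<Rightarrow> ereal) rel \<Rightarrow> bool" where
  "trop_congruence E \<longleftrightarrow> equiv trop_rat E \<and>
     (\<forall>(f, g)\<in>E. \<forall>(h, k)\<in>E. (tplus f h, tplus g k) \<in> E \<and> (ttimes f h, ttimes g k) \<in> E)"

definition cvar :: "(real^'n::finite \<Rightarrow> ereal) rel \<Rightarrow> (real^'n) set" where
  "cvar E = {x. \<forall>(f, g)\<in>E. f x = g x}"

definition cong_of :: "(real^'n::finite) set \<Rightarrow> (real^'n \<Rightarrow> ereal) rel" where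
  "cong_of W = {(f, g). f \<in> trop_rat \<and> g \<in> trop_rat \<and> (\<forall>x\<in>W. f x = g x)}"

text \<open>Evaluation of a class (element of the quotient) at a point of the variety.\<close>
definition class_eval :: "('a \<Rightarrow> ereal) set \<Rightarrow> 'a \<Rightarrow> ereal" where
  "class_eval A y = (SOME f. f \<in> A) y"

text \<open>T-algebra homomorphism between quotients trop_rat // E and trop_rat // F
  (elements of the quotient are equivalence classes; pi_E f = E `` {f}).\<close>
definition talg_hom ::
  "(real^'n::finite \<Rightarrow> ereal) rel \<Rightarrow> (real^'m::finite \<Rightarrow> ereal) rel
   \<Rightarrow> ((real^'n \<Rightarrow> ereal) set \<Rightarrow> (real^'m \<Rightarrow> ereal) set) \<Rightarrow> bool" where
  "talg_hom E F \<psi> \<longleftrightarrow>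
     (\<forall>A\<in>trop_rat // E. \<psi> A \<in> trop_rat // F) \<and>
     (\<forall>c\<in>TT. \<psi> (E `` {tconst c}) = F `` {tconst c}) \<and>
     (\<forall>f\<in>trop_rat. \<forall>g\<in>trop_rat. \<forall>u\<in>\<psi> (E `` {f}). \<forall>v\<in>\<psi> (E `` {g}).
        \<psi> (E `` {tplus f g}) = F `` {tplus u v} \<and>
        \<psi> (E `` {ttimes f g}) = F `` {ttimes u v})"

definition ttheta ::
  "(real^'n::finite \<Rightarrow> ereal) rel \<Rightarrow> ((real^'n \<Rightarrow> ereal) set \<Rightarrow> (real^'m::finite \<Rightarrow> ereal) set)
   \<Rightarrow> real^'m \<Rightarrow> ereal^'n" where
  "ttheta E \<psi> y = (\<chi> i. class_eval (\<psi> (E `` {Xvar i})) y)"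

definition temb :: "real^'n::finite \<Rightarrow> ereal^'n" where
  "temb x = (\<chi> i. ereal (x $ i))"

text \<open>Inverse on the real part (used to evaluate f at theta(y), which lies in R^n).\<close>
definition treal :: "ereal^'n::finite \<Rightarrow> real^'n" where
  "treal z = (\<chi> i. real_of_ereal (z $ i))"

end

theory Submission
  imports Defs
begin

text \<open>
  Evaluating \<open>\<psi>(\<pi>\<^sub>E f)\<close> at a point \<open>y \<in> W\<close> is a \<open>T\<close>-algebra homomorphism from
  the tropical rational functions to \<open>T\<close>.  Tropical polynomial functions are generated by the
  constants and the \<open>X\<^sub>i\<close>, and every rational function \<open>f\<close> satisfies \<open>f \<odot> Q = P\<close> for
  polynomials \<open>P\<close>, \<open>Q\<close>, so such a homomorphism is evaluation at the point
  \<open>\<theta>(y) = (\<psi>(\<pi>\<^sub>E X\<^sub>i)(y))\<^sub>i\<close>, which is real because \<open>X\<^sub>i\<close> is invertible.  This gives (1),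
  and (2) follows since \<open>\<pi>\<^sub>E\<close> identifies \<open>E\<close>-related functions.  The components of \<open>\<theta>\<close> are
  tropical rational functions, hence continuous.

  If \<open>\<psi>\<close> is surjective, choose \<open>g\<^sub>j\<close> with \<open>\<psi>(\<pi>\<^sub>E g\<^sub>j) = \<pi>\<^sub>F Y\<^sub>j\<close>; by (1), \<open>(g\<^sub>j)\<^sub>j\<close> is a
  continuous left inverse of \<open>\<theta>\<close> defined on all of \<open>\<real>\<^sup>n\<close>, so \<open>\<theta>\<close> is a closed embedding.
  If \<open>\<psi>\<close> is injective and \<open>F = E(W)\<close>, then (1) gives \<open>E(\<theta>(W)) \<subseteq> E\<close>, so
  \<open>V \<subseteq> V(E(\<theta>(W)))\<close>, and the latter is \<open>\<theta>(W)\<close> when \<open>\<theta>(W)\<close> is closed: a point \<open>x\<close> off a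
  closed set \<open>C\<close> is separated from \<open>C\<close> by the pair \<open>max(\<epsilon>, \<parallel>z - x\<parallel>\<^sub>1)\<close>, \<open>\<parallel>z - x\<parallel>\<^sub>1\<close>.
\<close>

section \<open>Tropical polynomial and rational functions\<close>

definition tterm :: "('n::finite \<Rightarrow> nat) \<times> real \<Rightarrow> real^'n \<Rightarrow> real" where
  "tterm p x = snd p + (\<Sum>i\<in>UNIV. real (fst p i) * x $ i)"

definition tpoly_mult ::
  "(('n::finite \<Rightarrow> nat) \<times> real) set \<Rightarrow> (('n \<Rightarrow> nat) \<times> real) set \<Rightarrow> (('n \<Rightarrow> nat) \<times> real) set" where
  "tpoly_mult P Q = (\<lambda>(p, q). (\<lambda>i. fst p i + fst q i, snd p + snd q)) ` (P \<times> Q)"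

lemma tpoly_eq_Max_tterm: "tpoly P x = Max ((\<lambda>p. tterm p x) ` P)"
  by (simp add: tpoly_def tterm_def case_prod_beta)

lemma tpoly_singleton [simp]: "tpoly {p} x = tterm p x"
  by (simp add: tpoly_eq_Max_tterm)

lemma tpoly_Un:
  assumes "finite P" "P \<noteq> {}" "finite Q" "Q \<noteq> {}"
  shows "tpoly (P \<union> Q) x = max (tpoly P x) (tpoly Q x)"
  using assms by (simp add: tpoly_eq_Max_tterm image_Un Max_Un)

lemma Max_image_plus_Times:
  fixes f g :: "'a \<Rightarrow> 'b::linordered_ab_semigroup_add"
  assumes "finite P" "P \<noteq> {}" "finite Q" "Q \<noteq> {}"
  shows "Max ((\<lambda>(p, q). f p + g q) ` (P \<times> Q)) = Max (f ` P) + Max (g ` Q)"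
proof (rule Max_eqI)
  show "finite ((\<lambda>(p, q). f p + g q) ` (P \<times> Q))" using assms by simp
  show "z \<le> Max (f ` P) + Max (g ` Q)" if "z \<in> (\<lambda>(p, q). f p + g q) ` (P \<times> Q)" for z
    using that assms by (auto intro!: add_mono)
  obtain p where "p \<in> P" "Max (f ` P) = f p"
    using Max_in[of "f ` P"] assms by blast
  moreover obtain q where "q \<in> Q" "Max (g ` Q) = g q"
    using Max_in[of "g ` Q"] assms by blast
  ultimately show "Max (f ` P) + Max (g ` Q) \<in> (\<lambda>(p, q). f p + g q) ` (P \<times> Q)"
    by force
qed

lemma tpoly_mult:
  assumes "finite P" "P \<noteq> {}" "finite Q" "Q \<noteq> {}"
  shows "tpoly (tpoly_mult P Q) x = tpoly P x + tpoly Q x"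
proof -
  have "(\<lambda>p. tterm p x) ` tpoly_mult P Q = (\<lambda>(p, q). tterm p x + tterm q x) ` (P \<times> Q)"
    unfolding tpoly_mult_def image_image
    by (intro image_cong) (auto simp: tterm_def algebra_simps sum.distrib)
  then show ?thesis
    using Max_image_plus_Times[OF assms] by (simp add: tpoly_eq_Max_tterm)
qed

lemma tpoly_mult_finite: "finite P \<Longrightarrow> finite Q \<Longrightarrow> finite (tpoly_mult P Q)"
  and tpoly_mult_nonempty: "P \<noteq> {} \<Longrightarrow> Q \<noteq> {} \<Longrightarrow> tpoly_mult P Q \<noteq> {}"
  by (simp_all add: tpoly_mult_def)

lemma trop_ratI:
  "finite P \<Longrightarrow> P \<noteq> {} \<Longrightarrow> finite Q \<Longrightarrow> Q \<noteq> {} \<Longrightarrow> (\<lambda>x. ereal (tpoly P x - tpoly Q x)) \<in> trop_rat"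
  unfolding trop_rat_def by blast

lemma trop_ratE:
  assumes "f \<in> trop_rat"
  obtains "f = (\<lambda>x. -\<infinity>)"
  | P Q where "finite P" "P \<noteq> {}" "finite Q" "Q \<noteq> {}" "f = (\<lambda>x. ereal (tpoly P x - tpoly Q x))"
  using assms unfolding trop_rat_def by blast

lemma trop_rat_tplus:
  assumes f: "f \<in> trop_rat" and g: "g \<in> trop_rat"
  shows "tplus f g \<in> trop_rat"
proof (cases rule: trop_ratE[OF f]; cases rule: trop_ratE[OF g])
  fix P Q P' Q'
  assume PQ: "finite P" "P \<noteq> {}" "finite Q" "Q \<noteq> {}" "f = (\<lambda>x. ereal (tpoly P x - tpoly Q x))"
    and PQ': "finite P'" "P' \<noteq> {}" "finite Q'" "Q' \<noteq> {}" "g = (\<lambda>x. ereal (tpoly P' x - tpoly Q' x))"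
  \<comment> \<open>\<open>max (p - q) (p' - q') = max (p + q') (p' + q) - (q + q')\<close>\<close>
  have "tplus f g = (\<lambda>x. ereal (tpoly (tpoly_mult P Q' \<union> tpoly_mult P' Q) x - tpoly (tpoly_mult Q Q') x))"
    using PQ PQ' by (auto simp: tplus_def tpoly_Un tpoly_mult tpoly_mult_finite tpoly_mult_nonempty
        fun_eq_iff max_def)
  then show ?thesis
    using PQ PQ' by (simp add: trop_ratI tpoly_mult_finite tpoly_mult_nonempty)
qed (use f g in \<open>simp_all add: tplus_def\<close>)

lemma trop_rat_ttimes:
  assumes f: "f \<in> trop_rat" and g: "g \<in> trop_rat"
  shows "ttimes f g \<in> trop_rat"
proof (cases rule: trop_ratE[OF f]; cases rule: trop_ratE[OF g])
  fix P Q P' Q'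
  assume PQ: "finite P" "P \<noteq> {}" "finite Q" "Q \<noteq> {}" "f = (\<lambda>x. ereal (tpoly P x - tpoly Q x))"
    and PQ': "finite P'" "P' \<noteq> {}" "finite Q'" "Q' \<noteq> {}" "g = (\<lambda>x. ereal (tpoly P' x - tpoly Q' x))"
  have "ttimes f g = (\<lambda>x. ereal (tpoly (tpoly_mult P P') x - tpoly (tpoly_mult Q Q') x))"
    using PQ PQ' by (simp add: ttimes_def tpoly_mult fun_eq_iff)
  then show ?thesis
    using PQ PQ' by (simp add: trop_ratI tpoly_mult_finite tpoly_mult_nonempty)
qed (use f g in \<open>simp_all add: ttimes_def trop_rat_def\<close>)

lemma trop_rat_tterm: "(\<lambda>x. ereal (tterm p x)) \<in> trop_rat"
  using trop_ratI[of "{p}" "{(\<lambda>_. 0, 0)}"] by (simp add: tterm_def)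

lemma tterm_unit_exp: "tterm (\<lambda>j. if j = i then 1 else 0, c) x = c + x $ i"
proof -
  have "real (if j = i then 1 else 0) * x $ j = (if j = i then x $ j else 0)" for j
    by simp
  then show ?thesis by (simp add: tterm_def)
qed

lemma trop_rat_tconst: "c \<in> TT \<Longrightarrow> tconst c \<in> trop_rat"
  using trop_rat_tterm[of "(\<lambda>_. 0, real_of_ereal c)"]
  by (cases c) (auto simp: TT_def tconst_def tterm_def trop_rat_def)

lemma trop_rat_Xvar: "Xvar i \<in> trop_rat"
  using trop_rat_tterm[of "(\<lambda>j. if j = i then 1 else 0, 0)"] by (simp add: Xvar_def tterm_unit_exp)

lemma trop_rat_neg_Xvar: "(\<lambda>x. ereal (- x $ i)) \<in> trop_rat"
  using trop_ratI[of "{(\<lambda>_. 0, 0)}" "{(\<lambda>j. if j = i then 1 else 0, 0)}"]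
  by (simp add: tterm_unit_exp) (simp add: tterm_def)

lemma ereal_sum_closed:
  assumes "finite S" and "tconst 0 \<in> A" and "\<And>f g. f \<in> A \<Longrightarrow> g \<in> A \<Longrightarrow> ttimes f g \<in> A"
    and "\<And>i. i \<in> S \<Longrightarrow> (\<lambda>x. ereal (h i x)) \<in> A"
  shows "(\<lambda>x. ereal (\<Sum>i\<in>S. h i x)) \<in> A"
  using assms(1,4)
proof (induction S rule: finite_induct)
  case empty
  then show ?case using assms(2) by (simp add: tconst_def zero_ereal_def)
next
  case (insert j S)
  then have "ttimes (\<lambda>x. ereal (h j x)) (\<lambda>x. ereal (\<Sum>i\<in>S. h i x)) \<in> A"
    by (intro assms(3)) auto
  then show ?case using insert by (simp add: ttimes_def)
qed

lemma trop_rat_l1_dist: "(\<lambda>z. ereal (\<Sum>i\<in>UNIV. \<bar>z $ i - x $ i\<bar>)) \<in> trop_rat"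
proof (rule ereal_sum_closed)
  fix i
  have "(\<lambda>z. ereal \<bar>z $ i - x $ i\<bar>) =
      tplus (ttimes (tconst (ereal (- x $ i))) (Xvar i)) (ttimes (tconst (ereal (x $ i))) (\<lambda>z. ereal (- z $ i)))"
    by (auto simp: tplus_def ttimes_def tconst_def Xvar_def abs_if max_def)
  also have "\<dots> \<in> trop_rat"
    by (intro trop_rat_tplus trop_rat_ttimes trop_rat_tconst trop_rat_Xvar trop_rat_neg_Xvar)
      (auto simp: TT_def)
  finally show "(\<lambda>z. ereal \<bar>z $ i - x $ i\<bar>) \<in> trop_rat" .
qed (auto intro: trop_rat_ttimes trop_rat_tconst simp: TT_def)

inductive_set tpoly_funs :: "(real^'n::finite \<Rightarrow> ereal) set" where
  tconst: "c \<in> TT \<Longrightarrow> tconst c \<in> tpoly_funs"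
| Xvar: "Xvar i \<in> tpoly_funs"
| tplus: "f \<in> tpoly_funs \<Longrightarrow> g \<in> tpoly_funs \<Longrightarrow> tplus f g \<in> tpoly_funs"
| ttimes: "f \<in> tpoly_funs \<Longrightarrow> g \<in> tpoly_funs \<Longrightarrow> ttimes f g \<in> tpoly_funs"

lemma tpoly_funs_imp_trop_rat: "f \<in> tpoly_funs \<Longrightarrow> f \<in> trop_rat"
  by (induction rule: tpoly_funs.induct)
    (auto intro: trop_rat_tconst trop_rat_Xvar trop_rat_tplus trop_rat_ttimes)

lemma tterm_in_tpoly_funs:
  fixes p :: "('n::finite \<Rightarrow> nat) \<times> real"
  shows "(\<lambda>x. ereal (tterm p x)) \<in> tpoly_funs"
proof -
  have zero: "tconst 0 \<in> tpoly_funs" by (rule tpoly_funs.tconst) (simp add: TT_def)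
  \<comment> \<open>\<open>k * x $ i\<close> is the \<open>k\<close>-fold tropical product of \<open>X\<^sub>i\<close>\<close>
  have "(\<lambda>x :: real^'n. ereal (\<Sum>j<k. x $ i)) \<in> tpoly_funs" for i and k :: nat
    using zero by (intro ereal_sum_closed) (auto intro: tpoly_funs.ttimes tpoly_funs.Xvar[unfolded Xvar_def])
  then have "(\<lambda>x. ereal (\<Sum>i\<in>UNIV. real (fst p i) * x $ i)) \<in> tpoly_funs"
    using zero by (intro ereal_sum_closed) (auto intro: tpoly_funs.ttimes)
  then have "ttimes (tconst (snd p)) (\<lambda>x. ereal (\<Sum>i\<in>UNIV. real (fst p i) * x $ i)) \<in> tpoly_funs"
    by (intro tpoly_funs.ttimes tpoly_funs.tconst) (simp add: TT_def)
  then show ?thesis by (simp add: ttimes_def tconst_def tterm_def)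
qed

lemma tpoly_in_tpoly_funs:
  assumes "finite P" "P \<noteq> {}"
  shows "(\<lambda>x. ereal (tpoly P x)) \<in> tpoly_funs"
  using assms
proof (induction P rule: finite_ne_induct)
  case (singleton p)
  then show ?case by (simp add: tterm_in_tpoly_funs)
next
  case (insert p P)
  then have "tplus (\<lambda>x. ereal (tterm p x)) (\<lambda>x. ereal (tpoly P x)) \<in> tpoly_funs"
    by (intro tpoly_funs.tplus tterm_in_tpoly_funs)
  then show ?case
    using insert tpoly_Un[of "{p}" P] by (simp add: tplus_def)
qed

lemma continuous_on_tpoly:
  assumes "finite P" "P \<noteq> {}"
  shows "continuous_on UNIV (tpoly P)"
  using assms
proof (induction P rule: finite_ne_induct)
  case (singleton p)
  then show ?case by (simp add: tpoly_singleton[abs_def] tterm_def) (intro continuous_intros)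
next
  case (insert p P)
  then have "tpoly (insert p P) = (\<lambda>x. max (tterm p x) (tpoly P x))"
    using tpoly_Un[of "{p}" P] by (simp add: fun_eq_iff)
  then show ?case
    using insert by (simp add: tterm_def) (intro continuous_intros)
qed

lemma continuous_on_trop_rat: "f \<in> trop_rat \<Longrightarrow> continuous_on UNIV f"
  by (erule trop_ratE) (auto intro!: continuous_on_ereal continuous_on_diff continuous_on_tpoly)

lemma continuous_on_real_of_trop_rat: "f \<in> trop_rat \<Longrightarrow> continuous_on UNIV (\<lambda>x. real_of_ereal (f x))"
  by (erule trop_ratE) (auto intro!: continuous_on_diff continuous_on_tpoly)

section \<open>Congruence varieties\<close>

lemma closed_cvar:
  assumes "E \<subseteq> trop_rat \<times> trop_rat"
  shows "closed (cvar E)"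
proof -
  have "cvar E = (\<Inter>(f, g)\<in>E. {x. f x = g x})"
    by (auto simp: cvar_def)
  moreover have "closed {x. f x = g x}" if "(f, g) \<in> E" for f g
    using that assms by (intro closed_Collect_eq continuous_on_trop_rat) auto
  ultimately show ?thesis by auto
qed

lemma cvar_cong_of_closed:
  assumes "closed C"
  shows "cvar (cong_of C) = C"
proof
  show "C \<subseteq> cvar (cong_of C)" by (auto simp: cvar_def cong_of_def)
  show "cvar (cong_of C) \<subseteq> C"
  proof
    fix x assume x: "x \<in> cvar (cong_of C)"
    show "x \<in> C"
    proof (rule ccontr)
      assume "x \<notin> C"
      then obtain e where "e > 0" and e: "ball x e \<subseteq> - C"
        using assms open_contains_ball[of "- C"] by (auto simp: closed_def)
      define d :: "real^'a \<Rightarrow> ereal" where "d z = ereal (\<Sum>i\<in>UNIV. \<bar>z $ i - x $ i\<bar>)" for z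
      \<comment> \<open>\<open>max e d\<close> agrees with \<open>d\<close> on \<open>C\<close> but not at \<open>x\<close>\<close>
      have "e \<le> d z" if "z \<in> C" for z
      proof -
        have "z \<notin> ball x e" using e that by blast
        then have "e \<le> dist x z" by simp
        also have "\<dots> \<le> (\<Sum>i\<in>UNIV. \<bar>(z - x) $ i\<bar>)"
          using norm_le_l1_cart[of "z - x"] by (simp add: dist_norm norm_minus_commute)
        finally show ?thesis by (simp add: d_def)
      qed
      moreover have "d \<in> trop_rat" using trop_rat_l1_dist[of x] by (simp add: d_def[abs_def])
      moreover have "tplus (tconst e) d \<in> trop_rat"
        using \<open>d \<in> trop_rat\<close> by (intro trop_rat_tplus trop_rat_tconst) (simp add: TT_def)
      ultimately have "(tplus (tconst e) d, d) \<in> cong_of C"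
        by (auto simp: cong_of_def tplus_def tconst_def max_def)
      then have "max e (d x) = d x"
        using x by (auto simp: cvar_def tplus_def tconst_def)
      moreover have "d x = 0" by (simp add: d_def zero_ereal_def)
      ultimately show False using \<open>e > 0\<close> by (simp add: zero_ereal_def)
    qed
  qed
qed

lemma treal_temb [simp]: "treal (temb x) = x"
  by (simp add: treal_def temb_def vec_eq_iff)

lemma homeomorphism_temb: "homeomorphism UNIV (range temb) temb treal"
proof (rule homeomorphismI)
  show "continuous_on UNIV temb"
    unfolding temb_def by (intro continuous_on_vec_lambda continuous_intros)
  show "continuous_on (range temb) treal"
    unfolding treal_def
    by (intro continuous_on_vec_lambda continuous_on_compose2[OF continuous_on_real]
        continuous_on_component continuous_on_id) (auto simp: temb_def)
qed auto

lemma closedin_range_temb_iff: "closedin (top_of_set (range temb)) (temb ` C) \<longleftrightarrow> closed C"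
proof
  assume "closedin (top_of_set (range temb)) (temb ` C)"
  then have "closedin (top_of_set UNIV) (treal ` temb ` C)"
    using homeomorphism_imp_closed_map homeomorphism_symD[OF homeomorphism_temb] by blast
  then show "closed C" by (simp add: image_image)
qed (use homeomorphism_imp_closed_map[OF homeomorphism_temb] in auto)

lemma closed_image_left_inverse:
  fixes f :: "'a::topological_space \<Rightarrow> 'b::t2_space"
  assumes "continuous_on UNIV f" "continuous_on UNIV g" "\<And>y. y \<in> S \<Longrightarrow> g (f y) = y" "closed S"
  shows "closed (f ` S)"
proof -
  have "f ` S = g -` S \<inter> {x. f (g x) = x}"
    using assms(3) by force
  moreover have "closed {x. f (g x) = x}"
    by (rule closed_Collect_eq[OF continuous_on_compose2[OF assms(1,2) subset_UNIV] continuous_on_id])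
  ultimately show ?thesis
    using assms by (simp add: closed_Int closed_vimage)
qed

lemma class_eval_mem:
  assumes "equiv X R" "A \<in> X // R"
  shows "class_eval A \<in> A"
proof -
  have "class_eval A = (SOME f. f \<in> A)" by (simp add: fun_eq_iff class_eval_def)
  then show ?thesis using in_quotient_imp_non_empty[OF assms] by (simp add: some_in_eq)
qed

lemma class_eval_eq:
  assumes F: "trop_congruence F" and A: "A \<in> trop_rat // F" and "u \<in> A" and "y \<in> cvar F"
  shows "class_eval A y = u y"
proof -
  have eq: "equiv trop_rat F" using F by (simp add: trop_congruence_def)
  have "(class_eval A, u) \<in> F"
    using quotient_eq_iff[OF eq A A class_eval_mem[OF eq A] \<open>u \<in> A\<close>] by simp
  then show ?thesis using \<open>y \<in> cvar F\<close> by (auto simp: cvar_def)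
qed

lemma class_eval_class:
  assumes F: "trop_congruence F" and "u \<in> trop_rat" and "y \<in> cvar F"
  shows "class_eval (F `` {u}) y = u y"
proof -
  have "equiv trop_rat F" using F by (simp add: trop_congruence_def)
  then show ?thesis
    using class_eval_eq[OF F quotientI equiv_class_self] assms by blast
qed

section \<open>The map \<open>\<theta>\<close>\<close>

locale trop_alg_hom =
  fixes E :: "(real^'n::finite \<Rightarrow> ereal) rel"
    and F :: "(real^'m::finite \<Rightarrow> ereal) rel"
    and \<psi> :: "(real^'n \<Rightarrow> ereal) set \<Rightarrow> (real^'m \<Rightarrow> ereal) set"
  assumes E: "trop_congruence E"
    and F: "trop_congruence F"
    and hom: "talg_hom E F \<psi>"
begin

lemma equiv_E: "equiv trop_rat E"
  using E by (simp add: trop_congruence_def)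

lemma equiv_F: "equiv trop_rat F"
  using F by (simp add: trop_congruence_def)

definition rep :: "(real^'n \<Rightarrow> ereal) \<Rightarrow> real^'m \<Rightarrow> ereal" where
  "rep f = class_eval (\<psi> (E `` {f}))"

definition theta_real :: "real^'m \<Rightarrow> real^'n" where
  "theta_real y = treal (ttheta E \<psi> y)"

lemma psi_class_in_quotient: "f \<in> trop_rat \<Longrightarrow> \<psi> (E `` {f}) \<in> trop_rat // F"
  using hom by (auto simp: talg_hom_def intro: quotientI)

lemma rep_mem: "f \<in> trop_rat \<Longrightarrow> rep f \<in> \<psi> (E `` {f})"
  unfolding rep_def by (rule class_eval_mem[OF equiv_F psi_class_in_quotient])

lemma rep_in_trop_rat: "f \<in> trop_rat \<Longrightarrow> rep f \<in> trop_rat"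
  using rep_mem in_quotient_imp_subset[OF equiv_F psi_class_in_quotient] by blast

lemma psi_class_eq:
  assumes f: "f \<in> trop_rat"
  shows "\<psi> (E `` {f}) = F `` {rep f}"
proof (rule quotient_eqI[OF equiv_F psi_class_in_quotient[OF f] quotientI rep_mem[OF f]])
  show "rep f \<in> trop_rat" by (rule rep_in_trop_rat[OF f])
  then show "rep f \<in> F `` {rep f}" "(rep f, rep f) \<in> F"
    using equiv_class_self[OF equiv_F] by auto
qed

lemma rep_tplus:
  assumes "f \<in> trop_rat" "g \<in> trop_rat" "y \<in> cvar F"
  shows "rep (tplus f g) y = max (rep f y) (rep g y)"
proof -
  have "\<psi> (E `` {tplus f g}) = F `` {tplus (rep f) (rep g)}"
    using hom assms rep_mem by (auto simp: talg_hom_def)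
  then show ?thesis
    using assms class_eval_class[OF F trop_rat_tplus[OF rep_in_trop_rat rep_in_trop_rat]]
    by (simp add: rep_def tplus_def)
qed

lemma rep_ttimes:
  assumes "f \<in> trop_rat" "g \<in> trop_rat" "y \<in> cvar F"
  shows "rep (ttimes f g) y = rep f y + rep g y"
proof -
  have "\<psi> (E `` {ttimes f g}) = F `` {ttimes (rep f) (rep g)}"
    using hom assms rep_mem by (auto simp: talg_hom_def)
  then show ?thesis
    using assms class_eval_class[OF F trop_rat_ttimes[OF rep_in_trop_rat rep_in_trop_rat]]
    by (simp add: rep_def ttimes_def)
qed

lemma rep_tconst: "c \<in> TT \<Longrightarrow> y \<in> cvar F \<Longrightarrow> rep (tconst c) y = c"
  using hom class_eval_class[OF F trop_rat_tconst]
  by (simp add: talg_hom_def rep_def tconst_def)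

lemma rep_Xvar: "y \<in> cvar F \<Longrightarrow> rep (Xvar i) y = ereal (theta_real y $ i)"
proof -
  assume y: "y \<in> cvar F"
  \<comment> \<open>\<open>X\<^sub>i\<close> is invertible, so its image cannot take the value \<open>-\<infinity>\<close>\<close>
  have "rep (Xvar i) y + rep (\<lambda>x. ereal (- x $ i)) y = rep (ttimes (Xvar i) (\<lambda>x. ereal (- x $ i))) y"
    by (rule rep_ttimes[OF trop_rat_Xvar trop_rat_neg_Xvar y, symmetric])
  also have "ttimes (Xvar i) (\<lambda>x. ereal (- x $ i)) = tconst 0"
    by (simp add: ttimes_def Xvar_def tconst_def fun_eq_iff zero_ereal_def)
  also have "rep (tconst 0) y = 0"
    using rep_tconst[OF _ y] by (simp add: TT_def)
  finally have "rep (Xvar i) y = ereal (real_of_ereal (rep (Xvar i) y))"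
    by (cases "rep (Xvar i) y"; cases "rep (\<lambda>x. ereal (- x $ i)) y") auto
  then show ?thesis
    by (simp add: theta_real_def treal_def ttheta_def rep_def)
qed

lemma ttheta_eq_temb: "y \<in> cvar F \<Longrightarrow> ttheta E \<psi> y = temb (theta_real y)"
  using rep_Xvar by (simp add: vec_eq_iff temb_def ttheta_def rep_def)

lemma rep_eq_theta_real:
  assumes f: "f \<in> trop_rat" and y: "y \<in> cvar F"
  shows "rep f y = f (theta_real y)"
proof -
  have rep_tpoly_funs: "rep g y = g (theta_real y)" if "g \<in> tpoly_funs" for g
    using that
    by induction (simp_all add: y rep_tconst rep_Xvar rep_tplus rep_ttimes tpoly_funs_imp_trop_rat,
        simp_all add: tconst_def Xvar_def tplus_def ttimes_def)
  show ?thesis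
  proof (cases rule: trop_ratE[OF f])
    case 1
    then show ?thesis
      using rep_tpoly_funs[OF tpoly_funs.tconst, of "-\<infinity>"] by (simp add: TT_def tconst_def)
  next
    case (2 P Q)
    have P: "(\<lambda>x. ereal (tpoly P x)) \<in> tpoly_funs" and Q: "(\<lambda>x. ereal (tpoly Q x)) \<in> tpoly_funs"
      using 2 by (simp_all add: tpoly_in_tpoly_funs)
    have "rep f y + rep (\<lambda>x. ereal (tpoly Q x)) y = rep (ttimes f (\<lambda>x. ereal (tpoly Q x))) y"
      by (rule rep_ttimes[OF f tpoly_funs_imp_trop_rat[OF Q] y, symmetric])
    also have "ttimes f (\<lambda>x. ereal (tpoly Q x)) = (\<lambda>x. ereal (tpoly P x))"
      using 2 by (simp add: ttimes_def fun_eq_iff)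
    finally have "rep f y + ereal (tpoly Q (theta_real y)) = ereal (tpoly P (theta_real y))"
      using rep_tpoly_funs[OF P] rep_tpoly_funs[OF Q] by simp
    then show ?thesis
      using 2 by (cases "rep f y") auto
  qed
qed

lemma theta_real_in_cvar:
  assumes y: "y \<in> cvar F"
  shows "theta_real y \<in> cvar E"
proof -
  have "f (theta_real y) = g (theta_real y)" if "(f, g) \<in> E" for f g
  proof -
    have "f \<in> trop_rat" "g \<in> trop_rat" "E `` {f} = E `` {g}"
      using that equiv_E by (auto simp: equiv_class_eq_iff)
    then have "rep f y = rep g y" by (simp add: rep_def)
    then show ?thesis
      using rep_eq_theta_real[OF \<open>f \<in> trop_rat\<close> y] rep_eq_theta_real[OF \<open>g \<in> trop_rat\<close> y] by simp
  qed
  then show ?thesis by (auto simp: cvar_def)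
qed

lemma continuous_on_theta_real: "continuous_on UNIV theta_real"
proof -
  have "theta_real = (\<lambda>y. \<chi> i. real_of_ereal (rep (Xvar i) y))"
    by (simp add: fun_eq_iff theta_real_def treal_def ttheta_def rep_def)
  then show ?thesis
    by (simp add: continuous_on_vec_lambda continuous_on_real_of_trop_rat rep_in_trop_rat trop_rat_Xvar)
qed

lemma theta_real_left_inverse:
  assumes surj: "\<psi> ` (trop_rat // E) = trop_rat // F"
  obtains G where "continuous_on UNIV G" "\<And>y. y \<in> cvar F \<Longrightarrow> G (theta_real y) = y"
proof -
  have "\<exists>g. g \<in> trop_rat \<and> \<psi> (E `` {g}) = F `` {Xvar j}" for j
  proof -
    have "F `` {Xvar j} \<in> \<psi> ` (trop_rat // E)"
      using surj quotientI[OF trop_rat_Xvar] by simp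
    then obtain A where "A \<in> trop_rat // E" "\<psi> A = F `` {Xvar j}" by blast
    then show ?thesis by (auto elim!: quotientE)
  qed
  then obtain g where g: "\<And>j. g j \<in> trop_rat" "\<And>j. \<psi> (E `` {g j}) = F `` {Xvar j}"
    by metis
  have gj: "g j (theta_real y) = ereal (y $ j)" if y: "y \<in> cvar F" for y j
  proof -
    have "g j (theta_real y) = class_eval (F `` {Xvar j}) y"
      using rep_eq_theta_real[OF g(1) y] by (simp add: rep_def g(2))
    also have "\<dots> = ereal (y $ j)"
      using class_eval_class[OF F trop_rat_Xvar y] by (simp add: Xvar_def)
    finally show ?thesis .
  qed
  define G where "G x = (\<chi> j. real_of_ereal (g j x))" for x
  show ?thesis
  proof (rule that)
    show "continuous_on UNIV G"
      unfolding G_def by (intro continuous_on_vec_lambda continuous_on_real_of_trop_rat g(1))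
    show "G (theta_real y) = y" if "y \<in> cvar F" for y
      using gj[OF that] by (simp add: G_def vec_eq_iff)
  qed
qed

lemma cong_of_image_subset:
  assumes inj: "inj_on \<psi> (trop_rat // E)" and FW: "F = cong_of (cvar F)"
  shows "cong_of (theta_real ` cvar F) \<subseteq> E"
proof
  fix p assume "p \<in> cong_of (theta_real ` cvar F)"
  then obtain f g where p: "p = (f, g)" and fg: "f \<in> trop_rat" "g \<in> trop_rat"
    and eq: "\<And>y. y \<in> cvar F \<Longrightarrow> f (theta_real y) = g (theta_real y)"
    by (auto simp: cong_of_def)
  have "(rep f, rep g) \<in> F"
    using eq fg by (subst FW) (simp add: cong_of_def rep_in_trop_rat rep_eq_theta_real)
  then have "\<psi> (E `` {f}) = \<psi> (E `` {g})"
    using fg by (simp add: psi_class_eq equiv_class_eq[OF equiv_F])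
  then have "E `` {f} = E `` {g}"
    using inj fg by (auto dest: inj_onD intro: quotientI)
  then show "p \<in> E"
    using p fg eq_equiv_class[OF _ equiv_E] by blast
qed

lemma class_eval_psi_ttheta:
  assumes f: "f \<in> trop_rat" and y: "y \<in> cvar F"
  shows "class_eval (\<psi> (E `` {f})) y = class_eval (E `` {f}) (treal (ttheta E \<psi> y)) \<and>
    class_eval (E `` {f}) (treal (ttheta E \<psi> y)) = f (treal (ttheta E \<psi> y))"
proof -
  have "class_eval (E `` {f}) (theta_real y) = f (theta_real y)"
    using class_eval_class[OF E f theta_real_in_cvar[OF y]] .
  then show ?thesis
    using rep_eq_theta_real[OF f y] by (simp add: rep_def theta_real_def)
qed

lemma ttheta_image: "ttheta E \<psi> ` cvar F = temb ` theta_real ` cvar F"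
  using ttheta_eq_temb by (simp add: image_image)

lemma ttheta_image_subset: "ttheta E \<psi> ` cvar F \<subseteq> temb ` cvar E"
  using theta_real_in_cvar by (auto simp: ttheta_image)

lemma continuous_on_ttheta: "continuous_on (cvar F) (ttheta E \<psi>)"
proof (rule continuous_on_eq)
  show "continuous_on (cvar F) (\<lambda>y. temb (theta_real y))"
    by (rule continuous_on_compose2[OF homeomorphism_cont1[OF homeomorphism_temb]
          continuous_on_subset[OF continuous_on_theta_real]]) auto
qed (simp add: ttheta_eq_temb)

lemma ttheta_closed_embedding:
  assumes "\<psi> ` (trop_rat // E) = trop_rat // F"
  shows "\<exists>g. homeomorphism (cvar F) (ttheta E \<psi> ` cvar F) (ttheta E \<psi>) g"
    and "closedin (top_of_set (range temb)) (ttheta E \<psi> ` cvar F)"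
    and "inj_on (ttheta E \<psi>) (cvar F)"
    and "closedin (top_of_set (temb ` cvar E)) (ttheta E \<psi> ` cvar F)"
proof -
  obtain G where G: "continuous_on UNIV G" "\<And>y. y \<in> cvar F \<Longrightarrow> G (theta_real y) = y"
    using theta_real_left_inverse[OF assms] by blast
  have "closed (cvar F)"
    using closed_cvar equiv_type[OF equiv_F] by blast
  with G have "closed (theta_real ` cvar F)"
    by (intro closed_image_left_inverse[OF continuous_on_theta_real])
  then show "closedin (top_of_set (range temb)) (ttheta E \<psi> ` cvar F)"
    by (simp only: ttheta_image closedin_range_temb_iff)
  then show "closedin (top_of_set (temb ` cvar E)) (ttheta E \<psi> ` cvar F)"
    using ttheta_image_subset by (rule closedin_subset_trans) auto
  have "homeomorphism (cvar F) (theta_real ` cvar F) theta_real G"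
    using G continuous_on_theta_real by (intro homeomorphismI) (auto intro: continuous_on_subset)
  moreover have "homeomorphism (theta_real ` cvar F) (temb ` theta_real ` cvar F) temb treal"
    by (rule homeomorphism_of_subsets[OF homeomorphism_temb]) auto
  ultimately have "homeomorphism (cvar F) (temb ` theta_real ` cvar F) (temb \<circ> theta_real) (G \<circ> treal)"
    by (rule homeomorphism_compose)
  then have hom_ttheta: "homeomorphism (cvar F) (ttheta E \<psi> ` cvar F) (ttheta E \<psi>) (G \<circ> treal)"
    by (rule homeomorphism_cong) (simp_all add: ttheta_image ttheta_eq_temb image_comp)
  then show "\<exists>g. homeomorphism (cvar F) (ttheta E \<psi> ` cvar F) (ttheta E \<psi>) g" by blast
  show "inj_on (ttheta E \<psi>) (cvar F)"
    using homeomorphism_apply1[OF hom_ttheta] by (rule inj_on_inverseI)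
qed

lemma temb_cvar_subset_ttheta_image:
  assumes "inj_on \<psi> (trop_rat // E)" and "F = cong_of (cvar F)"
    and "closedin (top_of_set (range temb)) (ttheta E \<psi> ` cvar F)"
  shows "temb ` cvar E \<subseteq> ttheta E \<psi> ` cvar F"
proof -
  have "closed (theta_real ` cvar F)"
    using assms(3) by (simp only: ttheta_image closedin_range_temb_iff)
  moreover have "cvar E \<subseteq> cvar (cong_of (theta_real ` cvar F))"
    using cong_of_image_subset[OF assms(1,2)] by (auto simp: cvar_def)
  ultimately have "cvar E \<subseteq> theta_real ` cvar F"
    by (simp add: cvar_cong_of_closed)
  then show ?thesis by (auto simp: ttheta_image)
qed

lemma ttheta_homeomorphism_cvar:
  assumes "bij_betw \<psi> (trop_rat // E) (trop_rat // F)" and "F = cong_of (cvar F)"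
  shows "\<exists>g. homeomorphism (cvar F) (temb ` cvar E) (ttheta E \<psi>) g"
proof -
  have surj: "\<psi> ` (trop_rat // E) = trop_rat // F" and inj: "inj_on \<psi> (trop_rat // E)"
    using assms(1) by (simp_all add: bij_betw_def)
  have "ttheta E \<psi> ` cvar F = temb ` cvar E"
    using temb_cvar_subset_ttheta_image[OF inj assms(2) ttheta_closed_embedding(2)[OF surj]]
      ttheta_image_subset by blast
  then show ?thesis using ttheta_closed_embedding(1)[OF surj] by simp
qed

end

theorem theorem3p15:
  fixes E :: "(real^'n::finite \<Rightarrow> ereal) rel"
    and F :: "(real^'m::finite \<Rightarrow> ereal) rel"
    and \<psi> :: "(real^'n \<Rightarrow> ereal) set \<Rightarrow> (real^'m \<Rightarrow> ereal) set"
  assumes E: "trop_congruence E"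
    and F: "trop_congruence F"
    and hom: "talg_hom E F \<psi>"
  defines "V \<equiv> cvar E" and "W \<equiv> cvar F" and "\<theta> \<equiv> ttheta E \<psi>"
  shows
    "(\<forall>f\<in>trop_rat. \<forall>y\<in>W.
        class_eval (\<psi> (E `` {f})) y = class_eval (E `` {f}) (treal (\<theta> y)) \<and>
        class_eval (E `` {f}) (treal (\<theta> y)) = f (treal (\<theta> y))) \<and>
     \<theta> ` W \<subseteq> temb ` V \<and>
     continuous_on W \<theta> \<and>
     (\<psi> ` (trop_rat // E) = trop_rat // F \<longrightarrow>
           inj_on \<theta> W \<and> (\<exists>g. homeomorphism W (\<theta> ` W) \<theta> g) \<and>
           closedin (top_of_set (temb ` V)) (\<theta> ` W)) \<and>
     (inj_on \<psi> (trop_rat // E) \<longrightarrow> F = cong_of W \<longrightarrow>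
           closedin (top_of_set (range temb)) (\<theta> ` W) \<longrightarrow> temb ` V \<subseteq> \<theta> ` W) \<and>
     (bij_betw \<psi> (trop_rat // E) (trop_rat // F) \<longrightarrow> F = cong_of W \<longrightarrow>
           (\<exists>g. homeomorphism W (temb ` V) \<theta> g))"
proof -
  interpret trop_alg_hom E F \<psi>
    using E F hom by (rule trop_alg_hom.intro)
  show ?thesis
    unfolding V_def W_def \<theta>_def
    by (intro conjI impI ballI)
      (assumption | rule class_eval_psi_ttheta[THEN conjunct1] class_eval_psi_ttheta[THEN conjunct2]
        ttheta_image_subset continuous_on_ttheta ttheta_closed_embedding
        temb_cvar_subset_ttheta_image ttheta_homeomorphism_cvar)+
qed

end
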